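(* Let $\lambda,\mu$ be partitions of $n$. Then: (1) $\mathbf{E}_\lambda=\mathbf{E}_\mu \iff Z_{\mathbf{E}_\lambda}=Z_{\mathbf{E}_\mu}\iff\lambda=\mu$; (2) $\mathbf{C}_\lambda=\mathbf{C}_\mu \iff Z_{\mathbf{C}_\lambda}=Z_{\mathbf{C}_\mu}\iff\lambda=\mu$; (3) $\mathbf{K}_\lambda=\mathbf{K}_\mu \iff Z_{\mathbf{K}_\lambda}=Z_{\mathbf{K}_\mu}\iff\lambda=\mu$; (4) consequently, in each of the three families $\{\mathbf{E}_\alpha\}_{\alpha\vdash n}$, $\{\mathbf{C}_\alpha\}_{\alpha\vdash n}$, $\{\mathbf{K}_\alpha\}_{\alpha\vdash n}$ the number of distinct isomorphism classes (and of distinct cycle index series) equals $p(n)$, the number of partitions of $n$.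
   Context: Species are functors from finite sets with bijections to finite sets; equality means natural isomorphism. For $H\le S_n$, $X^n/H$ is the species with $(X^n/H)[U]=\{\lambda H:\lambda:[n]\to U\text{ bijection}\}$, transport by left composition. The cycle index series of a species $F$ is $Z_F=\sum_{n\ge0}\frac1{n!}\sum_{\sigma\in S_n}|\mathrm{Fix}\,F[\sigma]|\,p_{\lambda(\sigma)}$, with $\lambda(\sigma)$ the cycle type and $p_\lambda$ power sums. For $\alpha\vdash n$: $\mathbf{E}_\alpha=X^n/S_\alpha$ with $S_\alpha=S_{\alpha_1}\times\cdots\times S_{\alpha_k}$ the Young subgroup; $\mathbf{C}_\alpha=X^n/\langle\sigma_\alpha\rangle$ where $\sigma_\alpha$ is the standard permutation filling cycles of lengths $\alpha_1,\alpha_2,\ldots$ with $1,\ldots,n$ in increasing order; and, writing $\alpha=(i_1^{\alpha_1},\ldots,i_m^{\alpha_m})$ with distinct part sizes $i_j$ of multiplicities $\alpha_j$, $\mathbf{K}_\alpha=X^n/G_\alpha$ where $G_\alpha=\langle\sigma_{i_m^{\alpha_m}}\rangle\times\cdots\times\langle\sigma_{i_1^{\alpha_1}}\rangle$, the factors being cyclic groups generated by standard permutations of shape $i_j^{\alpha_j}$ acting on consecutive disjoint blocks of $[n]$ (equivalently $\mathbf{K}_\alpha$ is the species product of the $\mathbf{C}_{i_j^{\alpha_j}}$). *)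

theory Defs
  imports Complex_Main "HOL-Combinatorics.Permutations" "HOL-Library.Multiset" "HOL-Library.FuncSet"
begin

text \<open>A species is given by its object map U |-> F[U] and its transport map
  sigma |-> F[sigma] (applied to a bijection sigma : U -> V between finite sets).\<close>

record 'b species =
  obj :: "nat set \<Rightarrow> 'b set"
  trans :: "(nat \<Rightarrow> nat) \<Rightarrow> 'b \<Rightarrow> 'b"

text \<open>Equality of species = natural isomorphism.\<close>
definition species_iso :: "'b species \<Rightarrow> 'b species \<Rightarrow> bool" where
  "species_iso F G \<longleftrightarrow>
     (\<exists>\<phi> :: nat set \<Rightarrow> 'b \<Rightarrow> 'b.
        (\<forall>U. finite U \<longrightarrow> bij_betw (\<phi> U) (obj F U) (obj G U)) \<and>
        (\<forall>U V \<sigma>. finite U \<and> finite V \<and> bij_betw \<sigma> U V \<longrightarrow>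
            (\<forall>x\<in>obj F U. \<phi> V (trans F \<sigma> x) = trans G \<sigma> (\<phi> U x))))"

text \<open>The species X^n/H, for H a set of permutations of [n] = {0..<n}:
  (X^n/H)[U] = { lambda H : lambda : [n] -> U bijection }, transport by left composition.\<close>
definition quot_species :: "nat \<Rightarrow> (nat \<Rightarrow> nat) set \<Rightarrow> (nat \<Rightarrow> nat) set species" where
  "quot_species n H =
     \<lparr> obj = (\<lambda>U. {(\<lambda>h. l \<circ> h) ` H | l. bij_betw l {0..<n} U \<and> l \<in> extensional {0..<n}}),
       trans = (\<lambda>\<sigma> c. (\<lambda>f. restrict (\<sigma> \<circ> f) {0..<n}) ` c) \<rparr>"

definition orbit_of :: "(nat \<Rightarrow> nat) \<Rightarrow> nat \<Rightarrow> nat set" where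
  "orbit_of \<sigma> x = {(\<sigma> ^^ k) x | k. True}"

definition cycle_type :: "nat \<Rightarrow> (nat \<Rightarrow> nat) \<Rightarrow> nat multiset" where
  "cycle_type n \<sigma> = image_mset card (mset_set (orbit_of \<sigma> ` {0..<n}))"

text \<open>The cycle index series Z_F, an element of Q[[p_1,p_2,...]], represented by its
  coefficient function in the basis p_lambda (lambda a multiset of part sizes):
  coefficient of p_lambda is (1/n!) * sum over sigma in S_n of cycle type lambda of |Fix F[sigma]|,
  where n = |lambda|.\<close>
definition cycle_index :: "'b species \<Rightarrow> nat multiset \<Rightarrow> rat" where
  "cycle_index F lam =
     (let n = sum_mset lam in
       (\<Sum>\<sigma> \<in> {\<sigma>. \<sigma> permutes {0..<n} \<and> cycle_type n \<sigma> = lam}.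
           of_nat (card {x \<in> obj F {0..<n}. trans F \<sigma> x = x})) / of_nat (fact n))"

definition is_partition :: "nat \<Rightarrow> nat list \<Rightarrow> bool" where
  "is_partition n \<alpha> \<longleftrightarrow> sorted_wrt (\<ge>) \<alpha> \<and> (\<forall>a\<in>set \<alpha>. 0 < a) \<and> sum_list \<alpha> = n"

definition num_partitions :: "nat \<Rightarrow> nat" where
  "num_partitions n = card {\<alpha>. is_partition n \<alpha>}"

text \<open>Standard permutation of shape alpha: cycles (0 1 .. a1-1)(a1 .. a1+a2-1)...\<close>
fun std_perm :: "nat list \<Rightarrow> nat \<Rightarrow> nat" where
  "std_perm [] x = x"
| "std_perm (a # as) x =
     (if x < a then (if Suc x < a then Suc x else 0) else a + std_perm as (x - a))"

fun block_of :: "nat list \<Rightarrow> nat \<Rightarrow> nat" where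
  "block_of [] x = 0"
| "block_of (a # as) x = (if x < a then 0 else Suc (block_of as (x - a)))"

definition young :: "nat list \<Rightarrow> (nat \<Rightarrow> nat) set" where
  "young \<alpha> = {p. p permutes {0..<sum_list \<alpha>} \<and>
                   (\<forall>x < sum_list \<alpha>. block_of \<alpha> (p x) = block_of \<alpha> x)}"

text \<open>Subgroup of S_n generated by a set of permutations (all of finite order here),
  i.e. the closure of the identity under left multiplication by generators.\<close>
inductive_set gen_group :: "(nat \<Rightarrow> nat) set \<Rightarrow> (nat \<Rightarrow> nat) set" for S where
  gen_id: "id \<in> gen_group S"
| gen_mult: "g \<in> S \<Longrightarrow> h \<in> gen_group S \<Longrightarrow> g \<circ> h \<in> gen_group S"

definition cyc_group :: "nat list \<Rightarrow> (nat \<Rightarrow> nat) set" where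
  "cyc_group \<alpha> = gen_group {std_perm \<alpha>}"

definition shift_perm :: "nat \<Rightarrow> nat \<Rightarrow> (nat \<Rightarrow> nat) \<Rightarrow> nat \<Rightarrow> nat" where
  "shift_perm s L g x = (if s \<le> x \<and> x < s + L then s + g (x - s) else x)"

definition runs :: "nat list \<Rightarrow> (nat \<times> nat) list" where
  "runs \<alpha> = map (\<lambda>i. (i, count_list \<alpha> i)) (remdups \<alpha>)"

fun kgens :: "nat \<Rightarrow> (nat \<times> nat) list \<Rightarrow> (nat \<Rightarrow> nat) list" where
  "kgens s [] = []"
| "kgens s ((i, m) # r) =
     shift_perm s (i * m) (std_perm (replicate m i)) # kgens (s + i * m) r"

text \<open>G_alpha = <sigma_{i_m^{alpha_m}}> x ... x <sigma_{i_1^{alpha_1}}> on consecutive blocks.\<close>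
definition K_group :: "nat list \<Rightarrow> (nat \<Rightarrow> nat) set" where
  "K_group \<alpha> = gen_group (set (kgens 0 (runs \<alpha>)))"

definition E_sp :: "nat list \<Rightarrow> (nat \<Rightarrow> nat) set species" where
  "E_sp \<alpha> = quot_species (sum_list \<alpha>) (young \<alpha>)"

definition C_sp :: "nat list \<Rightarrow> (nat \<Rightarrow> nat) set species" where
  "C_sp \<alpha> = quot_species (sum_list \<alpha>) (cyc_group \<alpha>)"

definition K_sp :: "nat list \<Rightarrow> (nat \<Rightarrow> nat) set species" where
  "K_sp \<alpha> = quot_species (sum_list \<alpha>) (K_group \<alpha>)"

definition num_iso_classes :: "nat \<Rightarrow> (nat list \<Rightarrow> 'b species) \<Rightarrow> nat" where
  "num_iso_classes n F =
     card ({\<alpha>. is_partition n \<alpha>} //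
           {(\<alpha>, \<beta>). is_partition n \<alpha> \<and> is_partition n \<beta> \<and> species_iso (F \<alpha>) (F \<beta>)})"

definition num_cycle_indices :: "nat \<Rightarrow> (nat list \<Rightarrow> 'b species) \<Rightarrow> nat" where
  "num_cycle_indices n F = card ((\<lambda>\<alpha>. cycle_index (F \<alpha>)) ` {\<alpha>. is_partition n \<alpha>})"

end

theory Submission
  imports Defs
begin

text \<open>For a group H of permutations of [n], the coefficient of p_\<rho> in the cycle index of
  X^n/H is nonzero exactly when \<rho> is the cycle type of an element of H: a permutation \<sigma> fixes
  the coset lH iff l\<inverse> \<sigma> l \<in> H. In each of the three families the group is a subgroup of a
  Young subgroup S_L containing \<sigma>_L, where L is a rearrangement of the parts of \<alpha>. The orbits
  of an element of S_L refine the blocks of L, so it has at least length L cycles, with equality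
  only for cycle type L itself, which \<sigma>_L attains. Hence the parts of \<alpha> form the unique
  cycle type with fewest cycles in the support of the cycle index, and the cycle index
  determines \<alpha>. Isomorphic species have equal cycle indices, which gives the remaining
  equivalences and the counts.\<close>

section \<open>Blocks and the standard permutation\<close>

definition block :: "nat list \<Rightarrow> nat \<Rightarrow> nat set" where
  "block L j = {x. x < sum_list L \<and> block_of L x = j}"

lemma block_of_less_length: "x < sum_list L \<Longrightarrow> block_of L x < length L"
  by (induction L arbitrary: x) auto

lemma block_Cons_0: "block (a # as) 0 = {0..<a}"
  by (auto simp: block_def)

lemma block_Cons_Suc: "block (a # as) (Suc j) = (\<lambda>x. a + x) ` block as j"
proof (intro set_eqI iffI)
  fix x assume "x \<in> block (a # as) (Suc j)"
  then show "x \<in> (\<lambda>x. a + x) ` block as j"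
    by (auto simp: block_def image_iff split: if_splits intro!: exI[of _ "x - a"])
qed (auto simp: block_def)

lemma card_block: "j < length L \<Longrightarrow> card (block L j) = L ! j"
proof (induction L arbitrary: j)
  case (Cons a as)
  then show ?case
    by (cases j) (simp_all add: block_Cons_0 block_Cons_Suc card_image)
qed simp

lemma block_nonempty: "\<forall>a\<in>set L. 0 < a \<Longrightarrow> j < length L \<Longrightarrow> block L j \<noteq> {}"
  using card_block[of j L] by (metis card.empty nth_mem not_less0)

lemma block_of_image:
  assumes "\<forall>a\<in>set L. 0 < a"
  shows "block_of L ` {0..<sum_list L} = {0..<length L}"
  using block_of_less_length block_nonempty[OF assms] by (fastforce simp: block_def)

lemma orbit_ofI: "(h ^^ k) x = y \<Longrightarrow> y \<in> orbit_of h x"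
  by (auto simp: orbit_of_def)

lemma orbit_of_self: "x \<in> orbit_of h x"
  by (rule orbit_ofI[where k = 0]) simp

lemma size_cycle_type: "size (cycle_type n h) = card (orbit_of h ` {0..<n})"
  by (simp add: cycle_type_def)

lemma std_perm_outside: "sum_list L \<le> x \<Longrightarrow> std_perm L x = x"
  by (induction L arbitrary: x) auto

lemma std_perm_in_block:
  "x < sum_list L \<Longrightarrow> std_perm L x < sum_list L \<and> block_of L (std_perm L x) = block_of L x"
  by (induction L arbitrary: x) auto

lemma inj_std_perm: "inj (std_perm L)"
proof (induction L)
  case (Cons a as)
  show ?case
  proof (rule injI)
    fix x y assume "std_perm (a # as) x = std_perm (a # as) y"
    then show "x = y"
      using Cons.IH by (auto simp: inj_eq split: if_splits)
  qed
qed (simp add: inj_on_def)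

lemma std_perm_permutes: "std_perm L permutes {0..<sum_list L}"
proof (rule bij_imp_permutes)
  have "std_perm L ` {0..<sum_list L} = {0..<sum_list L}"
    using std_perm_in_block inj_on_subset[OF inj_std_perm]
    by (intro endo_inj_surj) auto
  then show "bij_betw (std_perm L) {0..<sum_list L} {0..<sum_list L}"
    using inj_on_subset[OF inj_std_perm] by (simp add: bij_betw_def)
qed (simp add: std_perm_outside)

lemma std_perm_in_young: "std_perm L \<in> young L"
  using std_perm_permutes std_perm_in_block by (simp add: young_def)

lemma funpow_std_perm_Cons_less: "x < a \<Longrightarrow> (std_perm (a # as) ^^ k) x = (x + k) mod a"
proof (induction k)
  case (Suc k)
  have "std_perm (a # as) r = Suc r mod a" if "r < a" for r
    using that by (cases "Suc r = a") auto
  with Suc show ?case by (simp del: std_perm.simps add: mod_Suc_eq)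
qed simp

lemma funpow_std_perm_Cons_shift: "(std_perm (a # as) ^^ k) (a + x) = a + (std_perm as ^^ k) x"
  by (induction k) auto

lemma block_subset_orbit_of_std_perm:
  "x < sum_list L \<Longrightarrow> block L (block_of L x) \<subseteq> orbit_of (std_perm L) x"
proof (induction L arbitrary: x)
  case (Cons a as)
  show ?case
  proof (cases "x < a")
    case True
    show ?thesis
    proof
      fix y assume "y \<in> block (a # as) (block_of (a # as) x)"
      then have "y < a" using True by (simp add: block_def split: if_splits)
      then have "(std_perm (a # as) ^^ (y + a - x)) x = y"
        using True by (simp add: funpow_std_perm_Cons_less)
      then show "y \<in> orbit_of (std_perm (a # as)) x" by (rule orbit_ofI)
    qed
  next
    case False
    show ?thesis
    proof
      fix y assume "y \<in> block (a # as) (block_of (a # as) x)"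
      then have "y - a \<in> block as (block_of as (x - a))" and y: "y = a + (y - a)"
        using False by (auto simp: block_def split: if_splits)
      moreover have "x - a < sum_list as" using False Cons.prems by simp
      ultimately have "y - a \<in> orbit_of (std_perm as) (x - a)"
        using Cons.IH by blast
      then obtain k where "(std_perm as ^^ k) (x - a) = y - a"
        by (auto simp: orbit_of_def)
      then have "(std_perm (a # as) ^^ k) (a + (x - a)) = y"
        by (subst y) (simp only: funpow_std_perm_Cons_shift)
      then show "y \<in> orbit_of (std_perm (a # as)) x"
        using False by (auto intro: orbit_ofI)
    qed
  qed
qed simp

section \<open>Cycle types of block-preserving permutations\<close>

lemma young_in_block: "h \<in> young L \<Longrightarrow> x < sum_list L \<Longrightarrow> h x \<in> block L (block_of L x)"
  by (auto simp: young_def block_def dest: permutes_in_image)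

lemma orbit_of_subset_block:
  assumes "h \<in> young L" and "x < sum_list L"
  shows "orbit_of h x \<subseteq> block L (block_of L x)"
proof -
  have "(h ^^ k) x \<in> block L (block_of L x)" for k
    by (induction k) (use assms young_in_block in \<open>auto simp: block_def\<close>)
  then show ?thesis by (auto simp: orbit_of_def)
qed

lemma block_of_image_orbit_of:
  "h \<in> young L \<Longrightarrow> x < sum_list L \<Longrightarrow> block_of L ` orbit_of h x = {block_of L x}"
  using orbit_of_subset_block[of h L x] orbit_of_self[of x h] by (auto simp: block_def)

lemma blocks_of_orbits:
  assumes "\<forall>a\<in>set L. 0 < a" and "h \<in> young L"
  shows "(\<lambda>S. block_of L ` S) ` orbit_of h ` {0..<sum_list L} = (\<lambda>j. {j}) ` {0..<length L}"
proof -
  have "(\<lambda>S. block_of L ` S) ` orbit_of h ` {0..<sum_list L} =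
      (\<lambda>j. {j}) ` block_of L ` {0..<sum_list L}"
    unfolding image_image using block_of_image_orbit_of[OF assms(2)]
    by (intro image_cong) simp_all
  then show ?thesis by (simp add: block_of_image[OF assms(1)])
qed

lemma length_le_size_cycle_type:
  assumes "\<forall>a\<in>set L. 0 < a" and "h \<in> young L"
  shows "length L \<le> size (cycle_type (sum_list L) h)"
proof -
  have "length L = card ((\<lambda>S. block_of L ` S) ` orbit_of h ` {0..<sum_list L})"
    by (simp add: blocks_of_orbits[OF assms] card_image)
  also have "\<dots> \<le> size (cycle_type (sum_list L) h)"
    by (simp add: size_cycle_type card_image_le)
  finally show ?thesis .
qed

lemma orbit_of_eq_block_if_size_eq:
  assumes pos: "\<forall>a\<in>set L. 0 < a" and h: "h \<in> young L"
    and size: "size (cycle_type (sum_list L) h) = length L" and x: "x < sum_list L"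
  shows "orbit_of h x = block L (block_of L x)"
proof
  let ?Orb = "orbit_of h ` {0..<sum_list L}"
  have "card ((\<lambda>S. block_of L ` S) ` ?Orb) = card ?Orb"
    using size by (simp add: blocks_of_orbits[OF pos h] card_image size_cycle_type)
  then have inj: "inj_on (\<lambda>S. block_of L ` S) ?Orb"
    by (simp add: eq_card_imp_inj_on)
  show "block L (block_of L x) \<subseteq> orbit_of h x"
  proof
    fix y assume y: "y \<in> block L (block_of L x)"
    then have "y < sum_list L" by (simp add: block_def)
    then have "block_of L ` orbit_of h y = block_of L ` orbit_of h x"
      using x y block_of_image_orbit_of[OF h] by (simp add: block_def)
    then have "orbit_of h y = orbit_of h x"
      using inj x \<open>y < sum_list L\<close> by (simp add: inj_on_eq_iff)
    then show "y \<in> orbit_of h x" using orbit_of_self[of y h] by simp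
  qed
qed (rule orbit_of_subset_block[OF h x])

lemma cycle_type_eq_mset_if_orbits_are_blocks:
  assumes pos: "\<forall>a\<in>set L. 0 < a"
    and orbits: "\<And>x. x < sum_list L \<Longrightarrow> orbit_of h x = block L (block_of L x)"
  shows "cycle_type (sum_list L) h = mset L"
proof -
  have Orb: "orbit_of h ` {0..<sum_list L} = block L ` {0..<length L}"
    unfolding block_of_image[OF pos, symmetric] image_image
    using orbits by (intro image_cong) simp_all
  have "inj_on (block L) {0..<length L}"
  proof (rule inj_onI)
    fix i j assume "i \<in> {0..<length L}" and eq: "block L i = block L j"
    then obtain y where "y \<in> block L i" using block_nonempty[OF pos] by fastforce
    then show "i = j" using eq by (auto simp: block_def)
  qed
  then have "cycle_type (sum_list L) h = image_mset card (image_mset (block L) (mset_set {0..<length L}))"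
    unfolding cycle_type_def Orb by (simp only: image_mset_mset_set)
  also have "\<dots> = image_mset (nth L) (mset_set {0..<length L})"
    unfolding image_mset.compositionality by (intro image_mset_cong) (simp add: card_block)
  also have "\<dots> = mset (map (nth L) [0..<length L])"
    by simp
  also have "\<dots> = mset L"
    by (simp add: map_nth)
  finally show ?thesis .
qed

lemma cycle_type_std_perm:
  "\<forall>a\<in>set L. 0 < a \<Longrightarrow> cycle_type (sum_list L) (std_perm L) = mset L"
  using orbit_of_subset_block[OF std_perm_in_young] block_subset_orbit_of_std_perm
  by (intro cycle_type_eq_mset_if_orbits_are_blocks) (simp_all add: subset_antisym)

lemma cycle_type_eq_mset_if_size_eq:
  assumes "\<forall>a\<in>set L. 0 < a" and "h \<in> young L"
    and "size (cycle_type (sum_list L) h) = length L"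
  shows "cycle_type (sum_list L) h = mset L"
  by (rule cycle_type_eq_mset_if_orbits_are_blocks[OF assms(1) orbit_of_eq_block_if_size_eq[OF assms]])

lemma cycle_type_conj:
  assumes l: "bij_betw l {0..<n} {0..<n}" and h: "\<forall>x<n. h x < n"
    and conj: "\<forall>x<n. \<sigma> (l x) = l (h x)"
  shows "cycle_type n \<sigma> = cycle_type n h"
proof -
  have pow: "(\<sigma> ^^ k) (l x) = l ((h ^^ k) x) \<and> (h ^^ k) x < n" if "x < n" for x k
    using that by (induction k) (auto simp: conj h)
  have orbits: "orbit_of \<sigma> (l x) = l ` orbit_of h x" if "x < n" for x
    using pow[OF that] by (auto simp: orbit_of_def)
  have sub: "S \<subseteq> {0..<n}" if "S \<in> orbit_of h ` {0..<n}" for S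
    using that pow by (auto simp: orbit_of_def)
  have inj: "inj_on l {0..<n}" using l by (simp add: bij_betw_def)
  have "orbit_of \<sigma> ` {0..<n} = orbit_of \<sigma> ` l ` {0..<n}"
    using l by (simp add: bij_betw_def)
  also have "\<dots> = image l ` orbit_of h ` {0..<n}"
    unfolding image_image using orbits by (intro image_cong) simp_all
  finally have orbits_\<sigma>: "orbit_of \<sigma> ` {0..<n} = image l ` orbit_of h ` {0..<n}" .
  have "inj_on (image l) (orbit_of h ` {0..<n})"
    by (rule inj_on_image, rule inj_on_subset[OF inj]) (use sub in auto)
  then have "cycle_type n \<sigma> = image_mset card (image_mset (image l) (mset_set (orbit_of h ` {0..<n})))"
    unfolding cycle_type_def orbits_\<sigma> by (simp only: image_mset_mset_set)
  also have "\<dots> = cycle_type n h"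
    unfolding cycle_type_def image_mset.compositionality
    by (intro image_mset_cong) (use sub in \<open>auto intro!: card_image inj_on_subset[OF inj]\<close>)
  finally show ?thesis .
qed

section \<open>The cycle index of a quotient species\<close>

lemma cycle_index_neq_0_iff:
  assumes "finite (obj F {0..<sum_mset \<rho>})"
  shows "cycle_index F \<rho> \<noteq> 0 \<longleftrightarrow>
    (\<exists>\<sigma>. \<sigma> permutes {0..<sum_mset \<rho>} \<and> cycle_type (sum_mset \<rho>) \<sigma> = \<rho> \<and>
         (\<exists>x\<in>obj F {0..<sum_mset \<rho>}. trans F \<sigma> x = x))"
proof -
  let ?S = "{\<sigma>. \<sigma> permutes {0..<sum_mset \<rho>} \<and> cycle_type (sum_mset \<rho>) \<sigma> = \<rho>}"
  let ?fix = "\<lambda>\<sigma>. {x \<in> obj F {0..<sum_mset \<rho>}. trans F \<sigma> x = x}"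
  have "finite ?S"
    by (rule finite_subset[OF _ finite_permutations[of "{0..<sum_mset \<rho>}"]]) auto
  moreover have "finite (?fix \<sigma>)" for \<sigma> using assms by simp
  ultimately have "(\<Sum>\<sigma>\<in>?S. card (?fix \<sigma>)) \<noteq> 0 \<longleftrightarrow> (\<exists>\<sigma>\<in>?S. ?fix \<sigma> \<noteq> {})"
    by simp
  then show ?thesis
    unfolding cycle_index_def Let_def by (simp flip: of_nat_sum) blast
qed

lemma species_iso_refl: "species_iso F F"
  unfolding species_iso_def by (intro exI[of _ "\<lambda>U x. x"]) (simp add: bij_betw_def)

lemma bij_betw_fixed_points_intertwined:
  assumes bij: "bij_betw \<phi> A B" and f: "f ` A \<subseteq> A" and comm: "\<forall>x\<in>A. \<phi> (f x) = g (\<phi> x)"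
  shows "bij_betw \<phi> {x \<in> A. f x = x} {y \<in> B. g y = y}"
proof -
  have "\<phi> ` {x \<in> A. f x = x} = {y \<in> B. g y = y}"
  proof (intro equalityI subsetI)
    fix y assume "y \<in> {y \<in> B. g y = y}"
    then obtain x where x: "x \<in> A" "y = \<phi> x" "g y = y"
      using bij by (auto simp: bij_betw_def)
    then have "f x = x"
      using comm f bij by (auto simp: bij_betw_def inj_on_def)
    then show "y \<in> \<phi> ` {x \<in> A. f x = x}" using x by blast
  qed (use bij comm in \<open>auto simp: bij_betw_def\<close>)
  then show ?thesis
    using bij by (auto simp: bij_betw_def intro: inj_on_subset)
qed

lemma species_iso_imp_cycle_index_eq:
  assumes iso: "species_iso F G"
    and closed: "\<And>m \<sigma>. \<sigma> permutes {0..<m} \<Longrightarrow> trans F \<sigma> ` obj F {0..<m} \<subseteq> obj F {0..<m}"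
  shows "cycle_index F = cycle_index G"
proof
  fix \<rho>
  obtain \<phi> where bij: "\<forall>U. finite U \<longrightarrow> bij_betw (\<phi> U) (obj F U) (obj G U)"
    and natural: "\<forall>U V \<sigma>. finite U \<and> finite V \<and> bij_betw \<sigma> U V \<longrightarrow>
        (\<forall>x\<in>obj F U. \<phi> V (trans F \<sigma> x) = trans G \<sigma> (\<phi> U x))"
    using iso unfolding species_iso_def by (elim exE conjE)
  have "card {x \<in> obj F {0..<m}. trans F \<sigma> x = x} = card {y \<in> obj G {0..<m}. trans G \<sigma> y = y}"
    if \<sigma>: "\<sigma> permutes {0..<m}" for m \<sigma>
  proof -
    have "\<forall>x\<in>obj F {0..<m}. \<phi> {0..<m} (trans F \<sigma> x) = trans G \<sigma> (\<phi> {0..<m} x)"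
      using natural permutes_imp_bij[OF \<sigma>] by blast
    then have "bij_betw (\<phi> {0..<m}) {x \<in> obj F {0..<m}. trans F \<sigma> x = x}
        {y \<in> obj G {0..<m}. trans G \<sigma> y = y}"
      using bij closed[OF \<sigma>] by (intro bij_betw_fixed_points_intertwined) simp_all
    then show ?thesis by (rule bij_betw_same_card)
  qed
  then show "cycle_index F \<rho> = cycle_index G \<rho>"
    unfolding cycle_index_def Let_def by (intro arg_cong2[where f = "(/)"] sum.cong refl) simp_all
qed

lemma obj_quot_species:
  "obj (quot_species n H) U =
     {(\<lambda>h. l \<circ> h) ` H | l. bij_betw l {0..<n} U \<and> l \<in> extensional {0..<n}}"
  by (simp add: quot_species_def)

lemma trans_quot_species:
  "trans (quot_species n H) \<sigma> C = (\<lambda>f. restrict (\<sigma> \<circ> f) {0..<n}) ` C"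
  by (simp add: quot_species_def)

lemma finite_obj_quot_species: "finite (obj (quot_species n H) {0..<m})"
proof (rule finite_subset)
  show "obj (quot_species n H) {0..<m} \<subseteq> (\<lambda>l. (\<lambda>h. l \<circ> h) ` H) ` ({0..<n} \<rightarrow>\<^sub>E {0..<m})"
    by (auto simp: obj_quot_species bij_betw_def PiE_def)
qed (simp add: finite_PiE)

lemma trans_quot_species_in_obj:
  assumes H: "\<forall>h\<in>H. h permutes {0..<n}" and \<sigma>: "\<sigma> permutes U"
    and C: "C \<in> obj (quot_species n H) U"
  shows "trans (quot_species n H) \<sigma> C \<in> obj (quot_species n H) U"
proof -
  obtain l where C_def: "C = (\<lambda>h. l \<circ> h) ` H" and l: "bij_betw l {0..<n} U"
    using C by (auto simp: obj_quot_species)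
  define l' where "l' = restrict (\<sigma> \<circ> l) {0..<n}"
  have "bij_betw l' {0..<n} U"
    unfolding l'_def using bij_betw_trans[OF l permutes_imp_bij[OF \<sigma>]]
    by (rule bij_betw_cong[THEN iffD1, rotated]) simp
  moreover have "trans (quot_species n H) \<sigma> C = (\<lambda>h. l' \<circ> h) ` H"
    unfolding trans_quot_species C_def image_image
  proof (intro image_cong refl ext)
    fix h x assume "h \<in> H"
    then have h: "h permutes {0..<n}" using H by blast
    show "restrict (\<sigma> \<circ> (l \<circ> h)) {0..<n} x = (l' \<circ> h) x"
      using permutes_in_image[OF h, of x] permutes_not_in[OF h, of x] by (auto simp: l'_def)
  qed
  ultimately show ?thesis by (auto simp: obj_quot_species l'_def)
qed

lemma cycle_index_quot_species_cycle_type_neq_0: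
  assumes perm: "\<forall>h\<in>H. h permutes {0..<n}" and closed: "\<forall>g\<in>H. \<forall>h\<in>H. g \<circ> h \<in> H"
    and \<sigma>: "\<sigma> \<in> H" and sum: "sum_mset (cycle_type n \<sigma>) = n"
  shows "cycle_index (quot_species n H) (cycle_type n \<sigma>) \<noteq> 0"
proof -
  have "H \<subseteq> {p. p permutes {0..<n}}" using perm by blast
  then have fin: "finite H" by (rule finite_subset) (simp add: finite_permutations)
  have \<sigma>_perm: "\<sigma> permutes {0..<n}" using perm \<sigma> by blast
  have "inj_on (\<lambda>h. \<sigma> \<circ> h) H"
  proof (rule inj_onI, rule ext)
    fix g h x assume "\<sigma> \<circ> g = \<sigma> \<circ> h"
    then have "\<sigma> (g x) = \<sigma> (h x)" by (simp add: fun_eq_iff)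
    then show "g x = h x" by (rule injD[OF permutes_inj[OF \<sigma>_perm]])
  qed
  moreover have "(\<lambda>h. \<sigma> \<circ> h) ` H \<subseteq> H" using closed \<sigma> by blast
  ultimately have \<sigma>H: "(\<lambda>h. \<sigma> \<circ> h) ` H = H"
    using endo_inj_surj[OF fin] by blast
  txt \<open>\<sigma> fixes the coset H itself.\<close>
  define l where "l = restrict id {0..<n}"
  have l: "bij_betw l {0..<n} {0..<n}"
    unfolding l_def by (rule bij_betw_cong[THEN iffD1, of _ id]) auto
  define C where "C = (\<lambda>h. l \<circ> h) ` H"
  have "C \<in> obj (quot_species n H) {0..<n}"
    unfolding obj_quot_species C_def using l by (auto simp: l_def)
  moreover have "trans (quot_species n H) \<sigma> C = (\<lambda>h. l \<circ> h) ` (\<lambda>h. \<sigma> \<circ> h) ` H"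
    unfolding trans_quot_species C_def image_image
  proof (intro image_cong refl ext)
    fix h x assume "h \<in> H"
    then have h: "h permutes {0..<n}" using perm by blast
    show "restrict (\<sigma> \<circ> (l \<circ> h)) {0..<n} x = (l \<circ> (\<sigma> \<circ> h)) x"
      using permutes_in_image[OF h, of x] permutes_not_in[OF h, of x]
        permutes_in_image[OF \<sigma>_perm, of "h x"] permutes_not_in[OF \<sigma>_perm, of x]
      by (auto simp: l_def)
  qed
  ultimately have "\<exists>C\<in>obj (quot_species n H) {0..<n}. trans (quot_species n H) \<sigma> C = C"
    unfolding \<sigma>H C_def by auto
  then show ?thesis
    using perm \<sigma> by (subst cycle_index_neq_0_iff) (auto simp: sum finite_obj_quot_species)
qed

lemma cycle_index_quot_species_neq_0_imp_cycle_type: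
  assumes perm: "\<forall>h\<in>H. h permutes {0..<n}" and "id \<in> H" and sum: "sum_mset \<rho> = n"
    and "cycle_index (quot_species n H) \<rho> \<noteq> 0"
  obtains h where "h \<in> H" and "cycle_type n h = \<rho>"
proof -
  obtain \<sigma> C where \<sigma>: "\<sigma> permutes {0..<n}" "cycle_type n \<sigma> = \<rho>"
    and C: "C \<in> obj (quot_species n H) {0..<n}" and fixed: "trans (quot_species n H) \<sigma> C = C"
    using assms(4) by (subst (asm) cycle_index_neq_0_iff) (auto simp: sum finite_obj_quot_species)
  obtain l where C_def: "C = (\<lambda>h. l \<circ> h) ` H" and l: "bij_betw l {0..<n} {0..<n}"
    using C by (auto simp: obj_quot_species)
  txt \<open>As \<sigma> fixes lH, \<sigma> l = l h for some h \<in> H.\<close>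
  have "l \<in> C" unfolding C_def using \<open>id \<in> H\<close> by (metis comp_id image_eqI)
  then have "restrict (\<sigma> \<circ> l) {0..<n} \<in> C"
    using fixed by (auto simp: trans_quot_species)
  then obtain h where h: "h \<in> H" and conj: "restrict (\<sigma> \<circ> l) {0..<n} = l \<circ> h"
    using C_def by auto
  have "h permutes {0..<n}" using perm h by blast
  then have "\<forall>x<n. h x < n" using permutes_in_image by fastforce
  moreover have "\<forall>x<n. \<sigma> (l x) = l (h x)"
    using fun_cong[OF conj] by (metis atLeastLessThan_iff comp_apply restrict_apply' zero_le)
  ultimately have "cycle_type n \<sigma> = cycle_type n h"
    by (rule cycle_type_conj[OF l])
  with h \<sigma> show thesis using that by simp
qed

section \<open>Recovering the shape from the cycle index\<close>

text \<open>Closure under composition suffices: a submonoid of the finite group S_L is a subgroup.\<close>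

definition shape_subgroup :: "nat list \<Rightarrow> (nat \<Rightarrow> nat) set \<Rightarrow> bool" where
  "shape_subgroup L H \<longleftrightarrow>
     H \<subseteq> young L \<and> id \<in> H \<and> std_perm L \<in> H \<and> (\<forall>g\<in>H. \<forall>h\<in>H. g \<circ> h \<in> H)"

lemma shape_subgroup_permutes: "shape_subgroup L H \<Longrightarrow> \<forall>h\<in>H. h permutes {0..<sum_list L}"
  by (auto simp: shape_subgroup_def young_def)

lemma cycle_index_quot_species_shape_neq_0:
  assumes pos: "\<forall>a\<in>set L. 0 < a" and H: "shape_subgroup L H"
  shows "cycle_index (quot_species (sum_list L) H) (mset L) \<noteq> 0"
  using cycle_index_quot_species_cycle_type_neq_0[OF shape_subgroup_permutes[OF H], of "std_perm L"] H
  by (simp add: shape_subgroup_def cycle_type_std_perm[OF pos] sum_mset_sum_list)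

lemma shape_minimal_in_cycle_index_support:
  assumes pos: "\<forall>a\<in>set L. 0 < a" and H: "shape_subgroup L H" and sum: "sum_mset \<rho> = sum_list L"
    and "cycle_index (quot_species (sum_list L) H) \<rho> \<noteq> 0"
  shows "length L \<le> size \<rho>" and "size \<rho> = length L \<Longrightarrow> \<rho> = mset L"
proof -
  obtain h where "h \<in> H" and h: "cycle_type (sum_list L) h = \<rho>"
    using cycle_index_quot_species_neq_0_imp_cycle_type[OF shape_subgroup_permutes[OF H] _ sum]
      assms(4) H by (auto simp: shape_subgroup_def)
  then have "h \<in> young L" using H by (auto simp: shape_subgroup_def)
  then show "length L \<le> size \<rho>" and "size \<rho> = length L \<Longrightarrow> \<rho> = mset L"
    using length_le_size_cycle_type[OF pos] cycle_type_eq_mset_if_size_eq[OF pos] h by auto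
qed

lemma mset_eq_if_cycle_index_quot_species_eq:
  assumes pos: "\<forall>a\<in>set L. 0 < a" "\<forall>a\<in>set M. 0 < a" and sum: "sum_list L = sum_list M"
    and H: "shape_subgroup L H" and K: "shape_subgroup M K"
    and eq: "cycle_index (quot_species (sum_list L) H) = cycle_index (quot_species (sum_list M) K)"
  shows "mset L = mset M"
proof -
  have M_in_H: "cycle_index (quot_species (sum_list L) H) (mset M) \<noteq> 0"
    using cycle_index_quot_species_shape_neq_0[OF pos(2) K] eq by simp
  have L_in_K: "cycle_index (quot_species (sum_list M) K) (mset L) \<noteq> 0"
    using cycle_index_quot_species_shape_neq_0[OF pos(1) H] eq by simp
  have "length L = length M"
    using shape_minimal_in_cycle_index_support(1)[OF pos(1) H _ M_in_H]
      shape_minimal_in_cycle_index_support(1)[OF pos(2) K _ L_in_K] sum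
    by (simp add: sum_mset_sum_list)
  then show ?thesis
    using shape_minimal_in_cycle_index_support(2)[OF pos(1) H _ M_in_H] sum
    by (simp add: sum_mset_sum_list)
qed

lemma partition_eq_if_mset_eq:
  assumes "is_partition n \<alpha>" "is_partition n \<beta>" "mset \<alpha> = mset \<beta>"
  shows "\<alpha> = \<beta>"
proof -
  have "sorted (rev \<alpha>)" "sorted (rev \<beta>)"
    using assms by (auto simp: is_partition_def sorted_wrt_rev)
  then have "rev \<alpha> = rev \<beta>"
    using assms(3) by (metis mset_rev properties_for_sort)
  then show ?thesis by simp
qed

lemma quot_species_family_classification:
  assumes F: "\<And>\<alpha>. F \<alpha> = quot_species (sum_list \<alpha>) (H \<alpha>)"
    and shape: "\<And>\<alpha>. is_partition n \<alpha> \<Longrightarrow> \<exists>L. shape_subgroup L (H \<alpha>) \<and> mset L = mset \<alpha>"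
    and \<alpha>: "is_partition n \<alpha>" and \<beta>: "is_partition n \<beta>"
  shows "species_iso (F \<alpha>) (F \<beta>) \<longleftrightarrow> \<alpha> = \<beta>"
    and "cycle_index (F \<alpha>) = cycle_index (F \<beta>) \<longleftrightarrow> \<alpha> = \<beta>"
proof -
  obtain L M where L: "shape_subgroup L (H \<alpha>)" "mset L = mset \<alpha>"
    and M: "shape_subgroup M (H \<beta>)" "mset M = mset \<beta>"
    using shape \<alpha> \<beta> by blast
  have "set L = set \<alpha>" "set M = set \<beta>"
    using L(2) M(2) by (metis set_mset_mset)+
  then have pos: "\<forall>a\<in>set L. 0 < a" "\<forall>a\<in>set M. 0 < a"
    using \<alpha> \<beta> by (simp_all add: is_partition_def)
  have sums: "sum_list L = sum_list \<alpha>" "sum_list M = sum_list \<beta>"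
    using L(2) M(2) by (metis sum_mset_sum_list)+
  show ci: "cycle_index (F \<alpha>) = cycle_index (F \<beta>) \<longleftrightarrow> \<alpha> = \<beta>"
  proof
    assume "cycle_index (F \<alpha>) = cycle_index (F \<beta>)"
    then have "mset L = mset M"
      using \<alpha> \<beta> sums F
      by (intro mset_eq_if_cycle_index_quot_species_eq[OF pos _ L(1) M(1)])
        (simp_all add: is_partition_def)
    then show "\<alpha> = \<beta>" using partition_eq_if_mset_eq[OF \<alpha> \<beta>] L(2) M(2) by simp
  qed simp
  have closed: "trans (F \<alpha>) \<sigma> ` obj (F \<alpha>) {0..<m} \<subseteq> obj (F \<alpha>) {0..<m}"
    if "\<sigma> permutes {0..<m}" for m \<sigma>
    using trans_quot_species_in_obj[OF shape_subgroup_permutes[OF L(1)] that]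
    unfolding F sums(1) by blast
  show "species_iso (F \<alpha>) (F \<beta>) \<longleftrightarrow> \<alpha> = \<beta>"
  proof
    assume "species_iso (F \<alpha>) (F \<beta>)"
    then have "cycle_index (F \<alpha>) = cycle_index (F \<beta>)"
      using closed by (rule species_iso_imp_cycle_index_eq)
    then show "\<alpha> = \<beta>" using ci by simp
  qed (simp add: species_iso_refl)
qed

lemma num_iso_classes_eq_num_partitions:
  assumes "\<And>\<alpha> \<beta>. is_partition n \<alpha> \<Longrightarrow> is_partition n \<beta> \<Longrightarrow> species_iso (F \<alpha>) (F \<beta>) \<longleftrightarrow> \<alpha> = \<beta>"
  shows "num_iso_classes n F = num_partitions n"
proof -
  let ?P = "{\<alpha>. is_partition n \<alpha>}"
  have "{(\<alpha>, \<beta>). is_partition n \<alpha> \<and> is_partition n \<beta> \<and> species_iso (F \<alpha>) (F \<beta>)} = Id_on ?P"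
    by (auto simp: assms)
  moreover have "?P // Id_on ?P = (\<lambda>\<alpha>. {\<alpha>}) ` ?P"
    by (auto simp: quotient_def Id_on_def)
  ultimately show ?thesis
    by (simp add: num_iso_classes_def num_partitions_def card_image)
qed

lemma num_cycle_indices_eq_num_partitions:
  assumes "\<And>\<alpha> \<beta>. is_partition n \<alpha> \<Longrightarrow> is_partition n \<beta> \<Longrightarrow>
      cycle_index (F \<alpha>) = cycle_index (F \<beta>) \<Longrightarrow> \<alpha> = \<beta>"
  shows "num_cycle_indices n F = num_partitions n"
  unfolding num_cycle_indices_def num_partitions_def
  by (rule card_image) (use assms in \<open>auto simp: inj_on_def\<close>)

lemma quot_species_family_counts:
  assumes F: "\<And>\<alpha>. F \<alpha> = quot_species (sum_list \<alpha>) (H \<alpha>)"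
    and shape: "\<And>\<alpha>. is_partition n \<alpha> \<Longrightarrow> \<exists>L. shape_subgroup L (H \<alpha>) \<and> mset L = mset \<alpha>"
  shows "num_iso_classes n F = num_partitions n" and "num_cycle_indices n F = num_partitions n"
  using quot_species_family_classification[OF F shape]
  by (blast intro: num_iso_classes_eq_num_partitions num_cycle_indices_eq_num_partitions)+

section \<open>The groups of the three families\<close>

lemma id_in_young: "id \<in> young L"
  by (simp add: young_def permutes_id)

lemma comp_in_young: "g \<in> young L \<Longrightarrow> h \<in> young L \<Longrightarrow> g \<circ> h \<in> young L"
  using young_in_block[of h L] young_in_block[of g L]
  by (auto simp: young_def permutes_compose block_def)

lemma young_shape_subgroup: "shape_subgroup L (young L)"
  by (simp add: shape_subgroup_def id_in_young std_perm_in_young comp_in_young)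

lemma comp_in_gen_group: "g \<in> gen_group S \<Longrightarrow> h \<in> gen_group S \<Longrightarrow> g \<circ> h \<in> gen_group S"
  by (induction rule: gen_group.induct) (auto simp: comp_assoc intro: gen_group.intros)

lemma gen_group_subset_young: "S \<subseteq> young L \<Longrightarrow> gen_group S \<subseteq> young L"
proof
  fix h assume "S \<subseteq> young L" and "h \<in> gen_group S"
  then show "h \<in> young L"
    by (induction rule: gen_group.induct[OF \<open>h \<in> gen_group S\<close>])
      (auto simp: id_in_young comp_in_young)
qed

lemma foldr_comp_in_gen_group: "set gs \<subseteq> S \<Longrightarrow> foldr (\<circ>) gs id \<in> gen_group S"
  by (induction gs) (auto intro: gen_group.intros)

lemma shape_subgroup_gen_group:
  "S \<subseteq> young L \<Longrightarrow> std_perm L \<in> gen_group S \<Longrightarrow> shape_subgroup L (gen_group S)"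
  by (simp add: shape_subgroup_def gen_group_subset_young comp_in_gen_group gen_group.gen_id)

lemma shape_subgroup_cyc_group: "shape_subgroup L (cyc_group L)"
  unfolding cyc_group_def
  using foldr_comp_in_gen_group[of "[std_perm L]"] std_perm_in_young
  by (intro shape_subgroup_gen_group) auto

lemma block_of_append_left: "x < sum_list p \<Longrightarrow> block_of (p @ q) x = block_of p x"
  by (induction p arbitrary: x) auto

lemma block_of_append_right:
  "sum_list p \<le> x \<Longrightarrow> block_of (p @ q) x = length p + block_of q (x - sum_list p)"
  by (induction p arbitrary: x) (auto simp: diff_diff_add)

lemma shift_perm_permutes:
  assumes "g permutes {0..<k}"
  shows "shift_perm s k g permutes {s..<s + k}"
proof -
  have bij: "bij_betw ((+) s) {0..<k} {s..<s + k}" by (simp add: add.commute)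
  have "inv_into {0..<k} ((+) s) x = x - s" if "x \<in> {s..<s + k}" for x
    using that by (intro inv_into_f_eq) auto
  then have "shift_perm s k g =
      (\<lambda>x. if x \<in> {s..<s + k} then s + g (inv_into {0..<k} ((+) s) x) else x)"
    by (auto simp: shift_perm_def fun_eq_iff)
  then show ?thesis using permutes_bij_inv_into[OF assms bij] by simp
qed

lemma shift_perm_in_young:
  assumes g: "g \<in> young q"
  shows "shift_perm (sum_list p) (sum_list q) g \<in> young (p @ q @ r)"
proof -
  have "shift_perm (sum_list p) (sum_list q) g permutes {sum_list p..<sum_list p + sum_list q}"
    using g by (intro shift_perm_permutes) (simp add: young_def)
  then have "shift_perm (sum_list p) (sum_list q) g permutes {0..<sum_list (p @ q @ r)}"
    by (rule permutes_subset) auto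
  moreover have
    "block_of (p @ q @ r) (shift_perm (sum_list p) (sum_list q) g x) = block_of (p @ q @ r) x"
    if "sum_list p \<le> x" "x < sum_list p + sum_list q" for x
    using that young_in_block[OF g, of "x - sum_list p"]
    by (simp add: shift_perm_def block_def block_of_append_left block_of_append_right)
  ultimately show ?thesis
    by (auto simp: young_def shift_perm_def)
qed

lemma std_perm_append:
  "std_perm (p @ q) x =
     (if x < sum_list p then std_perm p x else sum_list p + std_perm q (x - sum_list p))"
  by (induction p arbitrary: x) (auto simp: diff_diff_add)

lemma shift_perm_std_perm_append:
  "shift_perm s (sum_list q + sum_list q') (std_perm (q @ q')) =
     shift_perm s (sum_list q) (std_perm q) \<circ> shift_perm (s + sum_list q) (sum_list q') (std_perm q')"
proof
  fix x
  show "shift_perm s (sum_list q + sum_list q') (std_perm (q @ q')) x =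
      (shift_perm s (sum_list q) (std_perm q) \<circ> shift_perm (s + sum_list q) (sum_list q') (std_perm q')) x"
    using std_perm_in_block[of "x - s" q] std_perm_in_block[of "x - s - sum_list q" q']
    by (auto simp: shift_perm_def std_perm_append diff_diff_add)
qed

text \<open>The parts of \<alpha> in the order of the blocks on which the generators of G_\<alpha> act.\<close>

definition expand_runs :: "(nat \<times> nat) list \<Rightarrow> nat list" where
  "expand_runs rs = concat (map (\<lambda>(i, m). replicate m i) rs)"

lemma expand_runs_Cons: "expand_runs ((i, m) # rs) = replicate m i @ expand_runs rs"
  by (simp add: expand_runs_def)

lemma mset_expand_runs_runs: "mset (expand_runs (runs \<alpha>)) = mset \<alpha>"
proof -
  have "mset (expand_runs (runs \<alpha>)) = (\<Sum>i\<in>set \<alpha>. replicate_mset (count_list \<alpha> i) i)"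
    by (simp add: expand_runs_def runs_def mset_concat o_def sum.distinct_set_conv_list[symmetric])
  also have "\<dots> = mset \<alpha>"
    by (rule multiset_eqI) (simp add: count_sum count_mset count_list_0_iff)
  finally show ?thesis .
qed

lemma kgens_in_young: "s = sum_list p \<Longrightarrow> set (kgens s rs) \<subseteq> young (p @ expand_runs rs @ r)"
proof (induction s rs arbitrary: p rule: kgens.induct)
  case (2 s i m rs)
  have "shift_perm s (i * m) (std_perm (replicate m i)) \<in> young (p @ replicate m i @ expand_runs rs @ r)"
    using shift_perm_in_young[OF std_perm_in_young] 2(2)
    by (metis sum_list_replicate of_nat_id mult.commute)
  moreover have "set (kgens (s + i * m) rs) \<subseteq> young ((p @ replicate m i) @ expand_runs rs @ r)"
    using 2 by (intro "2.IH") (simp add: sum_list_replicate mult.commute)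
  ultimately show ?case by (simp add: expand_runs_Cons)
qed simp

lemma foldr_comp_kgens:
  "foldr (\<circ>) (kgens s rs) id = shift_perm s (sum_list (expand_runs rs)) (std_perm (expand_runs rs))"
proof (induction s rs rule: kgens.induct)
  case (2 s i m rs)
  then show ?case
    using shift_perm_std_perm_append[of s "replicate m i" "expand_runs rs"]
    by (simp add: expand_runs_Cons sum_list_replicate mult.commute)
qed (auto simp: expand_runs_def shift_perm_def)

lemma shape_subgroup_K_group: "shape_subgroup (expand_runs (runs \<alpha>)) (K_group \<alpha>)"
  unfolding K_group_def
proof (rule shape_subgroup_gen_group)
  show "set (kgens 0 (runs \<alpha>)) \<subseteq> young (expand_runs (runs \<alpha>))"
    using kgens_in_young[of 0 "[]" _ "[]"] by simp
  have "foldr (\<circ>) (kgens 0 (runs \<alpha>)) id = std_perm (expand_runs (runs \<alpha>))"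
    by (auto simp: foldr_comp_kgens shift_perm_def std_perm_outside fun_eq_iff)
  then show "std_perm (expand_runs (runs \<alpha>)) \<in> gen_group (set (kgens 0 (runs \<alpha>)))"
    using foldr_comp_in_gen_group[of "kgens 0 (runs \<alpha>)"] by simp
qed

theorem mainTheorem4:
  fixes n :: nat and lam mu :: "nat list"
  assumes "is_partition n lam" and "is_partition n mu"
  shows "(species_iso (E_sp lam) (E_sp mu) \<longleftrightarrow> lam = mu) \<and>
         (cycle_index (E_sp lam) = cycle_index (E_sp mu) \<longleftrightarrow> lam = mu) \<and>
         (species_iso (C_sp lam) (C_sp mu) \<longleftrightarrow> lam = mu) \<and>
         (cycle_index (C_sp lam) = cycle_index (C_sp mu) \<longleftrightarrow> lam = mu) \<and>
         (species_iso (K_sp lam) (K_sp mu) \<longleftrightarrow> lam = mu) \<and>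
         (cycle_index (K_sp lam) = cycle_index (K_sp mu) \<longleftrightarrow> lam = mu) \<and>
         num_iso_classes n E_sp = num_partitions n \<and>
         num_cycle_indices n E_sp = num_partitions n \<and>
         num_iso_classes n C_sp = num_partitions n \<and>
         num_cycle_indices n C_sp = num_partitions n \<and>
         num_iso_classes n K_sp = num_partitions n \<and>
         num_cycle_indices n K_sp = num_partitions n"
proof -
  have E: "\<exists>L. shape_subgroup L (young \<alpha>) \<and> mset L = mset \<alpha>" for \<alpha>
    using young_shape_subgroup by blast
  have C: "\<exists>L. shape_subgroup L (cyc_group \<alpha>) \<and> mset L = mset \<alpha>" for \<alpha>
    using shape_subgroup_cyc_group by blast
  have K: "\<exists>L. shape_subgroup L (K_group \<alpha>) \<and> mset L = mset \<alpha>" for \<alpha>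
    using shape_subgroup_K_group mset_expand_runs_runs by blast
  show ?thesis
    using quot_species_family_classification[OF E_sp_def E assms]
      quot_species_family_classification[OF C_sp_def C assms]
      quot_species_family_classification[OF K_sp_def K assms]
      quot_species_family_counts[OF E_sp_def E] quot_species_family_counts[OF C_sp_def C]
      quot_species_family_counts[OF K_sp_def K]
    by blast
qed

end
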